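(* Assume Hypothesis (H), and let $b=b_1+b_2$, $M=N-P$ be splittings as described, with $J(x):=N-b_1(\cdot,x)$, $g(x):=a+Px+b_2(x,x)$, $f(x):=J(x)^{-1}g(x)$. Let $\hat f(x):=(M-b(\cdot,x))^{-1}a$ (the map obtained for the particular choice $b_1=b$, $b_2=0$, $N=M$, $P=0$). Then for every $x$ with $0\leq x\leq x_\ast$ and $F(x)\leq 0$, and every integer $k\geq 0$, one has $\hat f^{\,k}(x)\geq f^{\,k}(x)$ (where $f^k$ denotes the $k$-fold composition).
   Context: Inequalities between vectors/matrices are componentwise. An M-matrix is a matrix $sI-P$ with $P\geq0$ entrywise and $s\geq\rho(P)$ ($\rho$ = spectral radius). Let $M\in\mathbb R^{n\times n}$ be a nonsingular M-matrix, $a\in\mathbb R^n$ with $a\geq 0$, and $b:\mathbb R^n\times\mathbb R^n\to\mathbb R^n$ a bilinear map (not necessarily symmetric) with $b(x,y)\geq 0$ whenever $x,y\geq 0$. A solution of $Mx=a+b(x,x)$ means a vector $x\geq 0$ satisfying it; a solution $x_\ast$ is minimal if $x_\ast\leq y$ for every solution $y$. $F(x):=Mx-a-b(x,x)$. For a bilinear map $c$ and $x\in\mathbb R^n$, $c(x,\cdot)$ and $c(\cdot,x)$ denote the $n\times n$ matrices of $y\mapsto c(x,y)$ and $y\mapsto c(y,x)$; $F'_x:=M-b(x,\cdot)-b(\cdot,x)$. Hypothesis (H): the equation has a minimal solution $x_\ast$, $x_\ast>0$ (all components strictly positive), and either $F'_{x_\ast}$ is nonsingular, or $F'_{x_\ast}$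 is irreducible and $F'_x\neq F'_{x_\ast}$ for every $x$ with $0\leq x\leq x_\ast$, $x\neq x_\ast$. Splittings: $b=b_1+b_2$ with $b_1,b_2$ bilinear and $b_i(x,y)\geq0$ for $x,y\geq0$; $M=N-P$ with $N$ an M-matrix and $P\geq 0$. *)

theory Defs
  imports "HOL-Analysis.Analysis"
begin

definition spec_radius :: "real^'n^'n \<Rightarrow> real" where
  "spec_radius A = Sup {cmod l | l. \<exists>v::complex^'n. v \<noteq> 0 \<and>
      (\<chi> i j. complex_of_real (A$i$j)) *v v = l *s v}"

definition M_matrix :: "real^'n^'n \<Rightarrow> bool" where
  "M_matrix A \<longleftrightarrow> (\<exists>s (P::real^'n^'n). 0 \<le> P \<and> s \<ge> spec_radius P \<and> A = s *\<^sub>R mat 1 - P)"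

definition nonsingular_M_matrix :: "real^'n^'n \<Rightarrow> bool" where
  "nonsingular_M_matrix A \<longleftrightarrow> M_matrix A \<and> invertible A"

definition irreducible_mat :: "real^'n^'n \<Rightarrow> bool" where
  "irreducible_mat A \<longleftrightarrow> \<not> (\<exists>I::'n set. I \<noteq> {} \<and> I \<noteq> UNIV \<and>
      (\<forall>i\<in>I. \<forall>j. j \<notin> I \<longrightarrow> A$i$j = 0))"

definition nonneg_bilinear :: "(real^'n \<Rightarrow> real^'n \<Rightarrow> real^'n) \<Rightarrow> bool" where
  "nonneg_bilinear b \<longleftrightarrow> bilinear b \<and> (\<forall>x y. 0 \<le> x \<longrightarrow> 0 \<le> y \<longrightarrow> 0 \<le> b x y)"

definition is_solution :: "real^'n^'n \<Rightarrow> real^'n \<Rightarrow> (real^'n \<Rightarrow> real^'n \<Rightarrow> real^'n) \<Rightarrow> real^'n \<Rightarrow> bool" where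
  "is_solution M a b x \<longleftrightarrow> 0 \<le> x \<and> M *v x = a + b x x"

definition is_minimal_solution :: "real^'n^'n \<Rightarrow> real^'n \<Rightarrow> (real^'n \<Rightarrow> real^'n \<Rightarrow> real^'n) \<Rightarrow> real^'n \<Rightarrow> bool" where
  "is_minimal_solution M a b x \<longleftrightarrow> is_solution M a b x \<and> (\<forall>y. is_solution M a b y \<longrightarrow> x \<le> y)"

definition Fmap :: "real^'n^'n \<Rightarrow> real^'n \<Rightarrow> (real^'n \<Rightarrow> real^'n \<Rightarrow> real^'n) \<Rightarrow> real^'n \<Rightarrow> real^'n" where
  "Fmap M a b x = M *v x - a - b x x"

definition bl_left :: "(real^'n \<Rightarrow> real^'n \<Rightarrow> real^'n) \<Rightarrow> real^'n \<Rightarrow> real^'n^'n" where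
  "bl_left c x = matrix (\<lambda>y. c x y)"
definition bl_right :: "(real^'n \<Rightarrow> real^'n \<Rightarrow> real^'n) \<Rightarrow> real^'n \<Rightarrow> real^'n^'n" where
  "bl_right c x = matrix (\<lambda>y. c y x)"

definition Fderiv :: "real^'n^'n \<Rightarrow> (real^'n \<Rightarrow> real^'n \<Rightarrow> real^'n) \<Rightarrow> real^'n \<Rightarrow> real^'n^'n" where
  "Fderiv M b x = M - bl_left b x - bl_right b x"

definition hypH :: "real^'n^'n \<Rightarrow> real^'n \<Rightarrow> (real^'n \<Rightarrow> real^'n \<Rightarrow> real^'n) \<Rightarrow> real^'n \<Rightarrow> bool" where
  "hypH M a b xs \<longleftrightarrow> is_minimal_solution M a b xs \<and> (\<forall>i. 0 < xs$i) \<and>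
     (invertible (Fderiv M b xs) \<or>
      (irreducible_mat (Fderiv M b xs) \<and>
       (\<forall>x. 0 \<le> x \<and> x \<le> xs \<and> x \<noteq> xs \<longrightarrow> Fderiv M b x \<noteq> Fderiv M b xs)))"

end

theory Submission
  imports Defs
begin

(* The key fact is that for every splitting b = b1 + b2, M = N - P and every
   0 <= y <= x*, the Z-matrix J(y) = N - b1(.,y) is inverse positive
   (J(y) w >= 0 implies w >= 0).  If it were not, a maximum principle for
   Z-matrices, applied with the positive vector x* (J(y) x* >= 0), would produce
   a nonempty index block K decoupled from its complement; zeroing x* on K then
   gives a nonnegative supersolution not above x*, contradicting minimality,
   since every nonnegative supersolution dominates a solution (the limit of the
   monotone Picard iteration).

   Inverse positivity makes f(y) = J(y)^-1 g(y) a monotone self-map of [0, x*]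
   with y <= f(y) whenever F(y) <= 0.  The basic map fhat is the splitting
   b1 = b, b2 = 0, N = M, P = 0 (a sublocale); it preserves F <= 0 and dominates
   f on such points, and the theorem follows by induction over the iterates. *)


definition Z_matrix :: "real^'n^'n \<Rightarrow> bool" where
  "Z_matrix A \<longleftrightarrow> (\<forall>i j. i \<noteq> j \<longrightarrow> A$i$j \<le> 0)"

definition inverse_positive :: "real^'n^'n \<Rightarrow> bool" where
  "inverse_positive A \<longleftrightarrow> (\<forall>y. 0 \<le> A *v y \<longrightarrow> 0 \<le> y)"

definition zero_on :: "'n set \<Rightarrow> real^'n \<Rightarrow> real^'n" where
  "zero_on K x = (\<chi> i. if i \<in> K then 0 else x$i)"

lemma M_matrix_imp_Z_matrix: "M_matrix A \<Longrightarrow> Z_matrix A"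
  unfolding M_matrix_def Z_matrix_def by (auto simp: mat_def less_eq_vec_def)

lemma matrix_vector_mult_nth: "(A *v x)$i = (\<Sum>j\<in>UNIV. A$i$j * x$j)"
  by (simp add: matrix_vector_mult_def)

lemma nonneg_matrix_vector_mult: "0 \<le> (A::real^'n^'m) \<Longrightarrow> 0 \<le> x \<Longrightarrow> 0 \<le> A *v x"
  by (auto simp: matrix_vector_mult_nth less_eq_vec_def intro!: sum_nonneg)

lemma matrix_vector_mult_decoupled_row:
  assumes "\<And>j. j \<notin> K \<Longrightarrow> A$k$j = 0" and "\<And>j. j \<in> K \<Longrightarrow> z$j = 0"
  shows "(A *v z)$k = 0"
  unfolding matrix_vector_mult_nth
  by (intro sum.neutral ballI) (metis assms mult_zero_left mult_zero_right)

lemma vec_le_nth: "(x::real^'n) \<le> y \<Longrightarrow> x$i \<le> y$i"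
  by (simp add: less_eq_vec_def)

lemma zero_on_nonneg: "0 \<le> x \<Longrightarrow> 0 \<le> zero_on K x"
  by (auto simp: zero_on_def less_eq_vec_def)

lemma zero_on_le: "0 \<le> x \<Longrightarrow> zero_on K x \<le> x"
  by (auto simp: zero_on_def less_eq_vec_def)

lemma nonneg_bilinear_nonneg: "nonneg_bilinear c \<Longrightarrow> 0 \<le> x \<Longrightarrow> 0 \<le> y \<Longrightarrow> 0 \<le> c x y"
  by (simp add: nonneg_bilinear_def)

lemma nonneg_bilinear_mono:
  assumes c: "nonneg_bilinear c" and "0 \<le> x" "x \<le> x'" "0 \<le> y" "y \<le> y'"
  shows "c x y \<le> c x' y'"
proof -
  have bl: "bilinear c" using c by (simp add: nonneg_bilinear_def)
  have "c x' y' - c x y = c (x' - x) y' + c x (y' - y)"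
    using bilinear_lsub[OF bl] bilinear_rsub[OF bl] by simp
  moreover have "0 \<le> c (x' - x) y'" "0 \<le> c x (y' - y)"
    using c assms by (auto simp: nonneg_bilinear_def)
  ultimately show ?thesis by (metis add_nonneg_nonneg diff_ge_0_iff_ge)
qed

lemma bl_right_mult: "bilinear c \<Longrightarrow> bl_right c x *v y = c y x"
  unfolding bl_right_def bilinear_def by (simp add: matrix_works linear_matrix_vector_mul_eq)

lemma bl_right_nth: "bl_right c x $ i $ j = c (axis j 1) x $ i"
  by (simp add: bl_right_def matrix_def)

lemma bl_right_nonneg: "nonneg_bilinear c \<Longrightarrow> 0 \<le> x \<Longrightarrow> 0 \<le> bl_right c x $ i $ j"
  unfolding bl_right_nth nonneg_bilinear_def by (auto simp: less_eq_vec_def axis_def)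

lemma matrix_inv_mult_right:
  fixes A :: "real^'n^'n"
  assumes "invertible A"
  shows "A *v (matrix_inv A *v w) = w"
proof -
  have "A ** matrix_inv A = mat 1"
    using someI_ex[of "\<lambda>A'. A ** A' = mat 1 \<and> A' ** A = mat 1"] assms
    by (simp add: invertible_def matrix_inv_def)
  then show ?thesis by (simp add: matrix_vector_mul_assoc)
qed


lemma inverse_positive_mono:
  assumes "inverse_positive A" and "A *v x \<le> A *v y"
  shows "x \<le> y"
proof -
  have "0 \<le> A *v (y - x)" using assms(2) by (simp add: matrix_vector_mult_diff_distrib)
  then show ?thesis using assms(1) by (metis inverse_positive_def diff_ge_0_iff_ge)
qed

lemma inverse_positive_invertible:
  fixes A :: "real^'n^'n"
  assumes "inverse_positive A"
  shows "invertible A"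
proof -
  have "inj ((*v) A)"
    by (rule injI) (metis assms inverse_positive_mono order_antisym order_refl)
  then show ?thesis using matrix_left_invertible_injective invertible_left_inverse by blast
qed


lemma shift_to_boundary:
  fixes y v :: "real^'n"
  assumes v: "\<And>i. 0 < v$i" and y: "\<not> 0 \<le> y"
  obtains t where "0 < t" "0 \<le> y + t *s v" "\<exists>k. (y + t *s v)$k = 0"
proof -
  define r where "r i = - y$i / v$i" for i
  define t where "t = Max (range r)"
  have r_le: "r i \<le> t" for i unfolding t_def by simp
  have "t \<in> range r" unfolding t_def by (rule Max_in) auto
  then obtain m where m: "t = r m" by blast
  obtain i0 where "y$i0 < 0" using y by (auto simp: less_eq_vec_def not_le)
  then have "0 < r i0" using v[of i0] by (simp add: r_def divide_neg_pos)
  then have "0 < t" using r_le[of i0] by linarith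
  moreover have "0 \<le> y + t *s v"
  proof (unfold less_eq_vec_def, intro allI)
    fix i
    have "- y$i \<le> t * v$i" using r_le[of i] v[of i] by (simp add: r_def field_simps)
    then show "0$i \<le> (y + t *s v)$i" by simp
  qed
  moreover have "(y + t *s v)$m = 0" using m v[of m] by (simp add: r_def)
  ultimately show ?thesis using that by blast
qed

text \<open>The block is the zero set of the shifted vector.\<close>

lemma Z_matrix_max_principle:
  fixes A :: "real^'n^'n"
  assumes Z: "Z_matrix A" and v: "\<And>i. 0 < v$i" and Av: "0 \<le> A *v v"
    and Ay: "0 \<le> A *v y" and y: "\<not> 0 \<le> y"
  obtains K where "K \<noteq> {}" "\<And>k. k \<in> K \<Longrightarrow> (A *v v)$k = 0"
    "\<And>k j. k \<in> K \<Longrightarrow> j \<notin> K \<Longrightarrow> A$k$j = 0"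
proof -
  obtain t where t: "0 < t" and z_nonneg: "0 \<le> y + t *s v" and zero: "\<exists>k. (y + t *s v)$k = 0"
    using shift_to_boundary[OF v y] by blast
  define z where "z = y + t *s v"
  define K where "K = {k. z$k = 0}"
  have row: "(A *v v)$k = 0 \<and> (\<forall>j. j \<notin> K \<longrightarrow> A$k$j = 0)" if k: "k \<in> K" for k
  proof -
    have terms: "A$k$j * z$j \<le> 0" for j
      using Z z_nonneg k by (cases "j = k") (auto simp: K_def z_def Z_matrix_def
          less_eq_vec_def mult_nonpos_nonneg)
    have "(A *v z)$k = (A *v y)$k + t * (A *v v)$k"
      by (simp add: z_def matrix_vector_right_distrib matrix_vector_mult_scaleR
          scalar_mult_eq_scaleR)
    moreover have "0 \<le> (A *v y)$k" "0 \<le> t * (A *v v)$k"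
      using Ay Av t by (simp_all add: less_eq_vec_def)
    moreover have "(A *v z)$k \<le> 0"
      unfolding matrix_vector_mult_nth by (rule sum_nonpos) (use terms in auto)
    ultimately have "t * (A *v v)$k = 0" and "(\<Sum>j\<in>UNIV. A$k$j * z$j) = 0"
      unfolding matrix_vector_mult_nth[of A z] by linarith+
    then have Avk: "(A *v v)$k = 0" and "(\<Sum>j\<in>UNIV. A$k$j * z$j) = 0" using t by simp_all
    then have "(\<Sum>j\<in>UNIV. - (A$k$j * z$j)) = 0" by (simp add: sum_negf)
    then have "A$k$j * z$j = 0" for j
      using sum_nonneg_eq_0_iff[of UNIV "\<lambda>j. - (A$k$j * z$j)"] terms by auto
    then show ?thesis using Avk by (auto simp: K_def)
  qed
  moreover have "K \<noteq> {}" using zero by (auto simp: K_def z_def)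
  ultimately show ?thesis using that by blast
qed

lemma linear_inj_invariant_subspace_onto:
  fixes h :: "'a::euclidean_space \<Rightarrow> 'a"
  assumes h: "linear h" "inj h" and W: "subspace W" "h ` W \<subseteq> W"
  shows "h ` W = W"
proof -
  have "dim (h ` W) = dim W" using h by (intro dim_image_eq) (auto intro: inj_on_subset)
  then show ?thesis using subspace_dim_equal[OF real_vector.linear_subspace_image[OF h(1) W(1)] W(1) W(2)]
    by simp
qed

text \<open>An invertible Z-matrix with \<open>A v \<ge> 0\<close> for some positive \<open>v\<close> is inverse positive: the
  decoupled block of the maximum principle would give an invariant subspace
  \<open>{x. x_K = 0}\<close> containing \<open>A u\<close> but not \<open>u\<close>, where \<open>u\<close> is \<open>v\<close> restricted to \<open>K\<close>.\<close>

lemma Z_matrix_inverse_positive: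
  fixes A :: "real^'n^'n"
  assumes Z: "Z_matrix A" and inv: "invertible A" and v: "\<And>i. 0 < v$i"
    and Av: "0 \<le> A *v v"
  shows "inverse_positive A"
proof (unfold inverse_positive_def, intro allI impI, rule ccontr)
  fix y assume "0 \<le> A *v y" "\<not> 0 \<le> y"
  then obtain K where K: "K \<noteq> {}" "\<And>k. k \<in> K \<Longrightarrow> (A *v v)$k = 0"
    "\<And>k j. k \<in> K \<Longrightarrow> j \<notin> K \<Longrightarrow> A$k$j = 0"
    using Z_matrix_max_principle[OF Z v Av] by metis
  define W where "W = {x::real^'n. \<forall>k\<in>K. x$k = 0}"
  have inj: "inj ((*v) A)" by (rule inj_matrix_vector_mult[OF inv])
  have "subspace W" unfolding W_def subspace_def by auto
  moreover have "(*v) A ` W \<subseteq> W"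
    by (auto simp: W_def intro!: matrix_vector_mult_decoupled_row[where K=K] K(3))
  ultimately have onto: "(*v) A ` W = W"
    using inj by (intro linear_inj_invariant_subspace_onto) auto
  define u where "u = zero_on (- K) v"
  have "(A *v u)$k = (A *v v)$k" if "k \<in> K" for k
    unfolding matrix_vector_mult_nth using K(3)[OF that] by (intro sum.cong) (auto simp: u_def zero_on_def)
  then have "A *v u \<in> W" using K(2) by (simp add: W_def)
  then have "u \<in> W" using onto inj by (metis imageE injD)
  moreover obtain k where "k \<in> K" using K(1) by blast
  ultimately show False using v[of k] by (simp add: W_def u_def zero_on_def)
qed


lemma bounded_incseq_vec_convergent:
  fixes s :: "nat \<Rightarrow> real^'n"
  assumes inc: "\<And>k. s k \<le> s (Suc k)" and bound: "\<And>k. s k \<le> z"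
  obtains L where "s \<longlonglongrightarrow> L" "\<And>k. s k \<le> L" "L \<le> z"
proof -
  have inc_i: "incseq (\<lambda>k. s k $ i)" for i
    using inc by (intro incseq_SucI) (simp add: less_eq_vec_def)
  have bound_i: "\<forall>k. s k $ i \<le> z $ i" for i
    using bound by (simp add: less_eq_vec_def)
  have "\<exists>l. (\<lambda>k. s k $ i) \<longlonglongrightarrow> l" for i
    using incseq_convergent[OF inc_i bound_i] by metis
  then obtain l where l: "\<And>i. (\<lambda>k. s k $ i) \<longlonglongrightarrow> l i" by metis
  define L where "L = (\<chi> i. l i)"
  have "s \<longlonglongrightarrow> L" by (rule vec_tendstoI) (simp add: L_def l)
  moreover have "s k \<le> L" for k
    unfolding less_eq_vec_def L_def using incseq_le[OF inc_i l] by simp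
  moreover have "L \<le> z"
    unfolding less_eq_vec_def L_def using LIMSEQ_le_const2[OF l] bound_i by auto
  ultimately show ?thesis using that by blast
qed

lemma picard_iterates_bounded:
  fixes M :: "real^'n^'n"
  assumes M: "inverse_positive M" and a: "0 \<le> a" and b: "nonneg_bilinear b"
    and z: "0 \<le> z" and super: "a + b z z \<le> M *v z"
    and s0: "s 0 = 0" and sS: "\<And>k. M *v s (Suc k) = a + b (s k) (s k)"
  shows "0 \<le> s k \<and> s k \<le> s (Suc k) \<and> s (Suc k) \<le> z"
proof (induction k)
  case 0
  have "b 0 0 = 0" using b by (simp add: nonneg_bilinear_def bilinear_lzero)
  then have s1: "M *v s (Suc 0) = a" using sS[of 0] s0 by simp
  have "a \<le> M *v z" using super nonneg_bilinear_nonneg[OF b z z] by (meson le_add_same_cancel1 order_trans)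
  then have "s (Suc 0) \<le> z" using inverse_positive_mono[OF M] s1 by simp
  moreover have "0 \<le> s (Suc 0)" using M a s1 by (simp add: inverse_positive_def)
  ultimately show ?case using s0 by simp
next
  case (Suc k)
  then have h: "0 \<le> s k" "s k \<le> s (Suc k)" "s (Suc k) \<le> z" and h1: "0 \<le> s (Suc k)" by auto
  have "M *v s (Suc k) \<le> M *v s (Suc (Suc k))"
    unfolding sS using nonneg_bilinear_mono[OF b h(1,2,1,2)] by simp
  moreover have "M *v s (Suc (Suc k)) \<le> M *v z"
    unfolding sS using nonneg_bilinear_mono[OF b h1 h(3) h1 h(3)] super
    by (meson add_left_mono order_trans)
  ultimately have "s (Suc k) \<le> s (Suc (Suc k))" "s (Suc (Suc k)) \<le> z"
    using inverse_positive_mono[OF M] by blast+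
  then show ?case using h1 by blast
qed

text \<open>Every nonnegative supersolution dominates a solution, namely the limit of the
  Picard iteration.\<close>

lemma supersolution_dominates_solution:
  fixes M :: "real^'n^'n"
  assumes M: "inverse_positive M" and a: "0 \<le> a" and b: "nonneg_bilinear b"
    and z: "0 \<le> z" and super: "a + b z z \<le> M *v z"
  obtains s where "is_solution M a b s" "s \<le> z"
proof -
  define s where "s = rec_nat 0 (\<lambda>_ x. matrix_inv M *v (a + b x x))"
  have sS: "M *v s (Suc k) = a + b (s k) (s k)" for k
    by (simp add: s_def matrix_inv_mult_right[OF inverse_positive_invertible[OF M]])
  have bounds: "0 \<le> s k \<and> s k \<le> s (Suc k) \<and> s (Suc k) \<le> z" for k
    using picard_iterates_bounded[OF M a b z super, of s] sS by (simp add: s_def)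
  obtain L where L: "s \<longlonglongrightarrow> L" "\<And>k. s k \<le> L" "L \<le> z"
    using bounded_incseq_vec_convergent[of s z] bounds by (metis order_trans)
  have "(\<lambda>k. M *v s (Suc k)) \<longlonglongrightarrow> M *v L"
    using bounded_linear.tendsto[OF matrix_vector_mul_bounded_linear LIMSEQ_Suc[OF L(1)]] .
  moreover have "bounded_bilinear b"
    using b bilinear_conv_bounded_bilinear by (auto simp: nonneg_bilinear_def)
  then have "(\<lambda>k. b (s k) (s k)) \<longlonglongrightarrow> b L L"
    by (rule bounded_bilinear.tendsto[OF _ L(1) L(1)])
  then have "(\<lambda>k. M *v s (Suc k)) \<longlonglongrightarrow> a + b L L"
    unfolding sS by (rule tendsto_add[OF tendsto_const])
  ultimately have "M *v L = a + b L L" by (rule LIMSEQ_unique)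
  moreover have "0 \<le> L" using bounds L(2) by (metis order_trans)
  ultimately show ?thesis using that L(3) by (simp add: is_solution_def)
qed


locale qve =
  fixes M :: "real^'n^'n" and a xs :: "real^'n" and b :: "real^'n \<Rightarrow> real^'n \<Rightarrow> real^'n"
  assumes M_invertible: "invertible M" and M_Z: "Z_matrix M" and a_nonneg: "0 \<le> a"
    and b_nonneg: "nonneg_bilinear b"
    and xs_minimal: "is_minimal_solution M a b xs" and xs_pos: "\<And>i. 0 < xs$i"
begin

lemma xs_nonneg: "0 \<le> xs"
  using xs_pos by (simp add: less_eq_vec_def less_imp_le)

lemma M_xs: "M *v xs = a + b xs xs"
  using xs_minimal by (simp add: is_minimal_solution_def is_solution_def)

lemma M_inverse_positive: "inverse_positive M"
proof (rule Z_matrix_inverse_positive[OF M_Z M_invertible xs_pos])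
  show "0 \<le> M *v xs" using a_nonneg nonneg_bilinear_nonneg[OF b_nonneg xs_nonneg xs_nonneg]
    by (simp add: M_xs)
qed

lemma xs_below_supersolution: "0 \<le> z \<Longrightarrow> a + b z z \<le> M *v z \<Longrightarrow> xs \<le> z"
  using supersolution_dominates_solution[OF M_inverse_positive a_nonneg b_nonneg] xs_minimal
  by (metis is_minimal_solution_def order_trans)

text \<open>Zeroing \<open>xs\<close> on a block \<open>K\<close> keeps the supersolution inequality outside \<open>K\<close>, since the
  removed entries only meet off-diagonal, nonpositive entries of \<open>M\<close>.\<close>

lemma supersolution_outside_block:
  assumes i: "i \<notin> K"
  shows "(a + b (zero_on K xs) (zero_on K xs))$i \<le> (M *v zero_on K xs)$i"
proof -
  let ?z = "zero_on K xs"
  have "M$i$j * (xs - ?z)$j \<le> 0" for j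
  proof (cases "j \<in> K")
    case True
    then have "i \<noteq> j" using i by blast
    then have "M$i$j \<le> 0" using M_Z by (simp add: Z_matrix_def)
    then show ?thesis using True xs_nonneg
      by (simp add: zero_on_def less_eq_vec_def mult_nonpos_nonneg)
  qed (simp add: zero_on_def)
  then have "(M *v (xs - ?z))$i \<le> 0" unfolding matrix_vector_mult_nth by (rule sum_nonpos)
  then have "(M *v xs)$i \<le> (M *v ?z)$i" by (simp add: matrix_vector_mult_diff_distrib)
  moreover have "b ?z ?z \<le> b xs xs"
    by (rule nonneg_bilinear_mono[OF b_nonneg]) (simp_all add: zero_on_nonneg zero_on_le xs_nonneg)
  then have "b ?z ?z $ i \<le> b xs xs $ i" by (simp add: less_eq_vec_def)
  ultimately show ?thesis by (simp add: M_xs)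
qed

end


locale qve_splitting = qve +
  fixes N P :: "real^'n^'n" and b1 b2 :: "real^'n \<Rightarrow> real^'n \<Rightarrow> real^'n"
  assumes b1_nonneg: "nonneg_bilinear b1" and b2_nonneg: "nonneg_bilinear b2"
    and b_split: "\<And>x y. b x y = b1 x y + b2 x y"
    and N_Z: "Z_matrix N" and P_nonneg: "0 \<le> P" and M_split: "M = N - P"
begin

definition J :: "real^'n \<Rightarrow> real^'n^'n" where "J y = N - bl_right b1 y"

definition g :: "real^'n \<Rightarrow> real^'n" where "g y = a + P *v y + b2 y y"

definition iteration :: "real^'n \<Rightarrow> real^'n" where "iteration y = matrix_inv (J y) *v g y"

lemma J_mult: "J y *v w = N *v w - b1 w y"
  using b1_nonneg by (simp add: J_def nonneg_bilinear_def matrix_vector_mult_diff_rdistrib bl_right_mult)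

lemma N_mult: "N *v w = M *v w + P *v w"
  by (simp add: M_split matrix_vector_mult_diff_rdistrib)

lemma J_Z_matrix:
  assumes "0 \<le> y"
  shows "Z_matrix (J y)"
  unfolding Z_matrix_def J_def
proof (intro allI impI)
  fix i j :: 'n assume "i \<noteq> j"
  then have "N$i$j \<le> 0" using N_Z by (simp add: Z_matrix_def)
  moreover have "0 \<le> bl_right b1 y $ i $ j" by (rule bl_right_nonneg[OF b1_nonneg assms])
  ultimately show "(N - bl_right b1 y) $ i $ j \<le> 0" by simp
qed

lemma g_nonneg: "0 \<le> y \<Longrightarrow> 0 \<le> g y"
  using a_nonneg nonneg_matrix_vector_mult[OF P_nonneg] nonneg_bilinear_nonneg[OF b2_nonneg]
  by (simp add: g_def)

lemma g_mono:
  assumes "0 \<le> y" "y \<le> y'"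
  shows "g y \<le> g y'"
proof -
  have "P *v y \<le> P *v y'"
    using nonneg_matrix_vector_mult[OF P_nonneg, of "y' - y"] assms
    by (simp add: matrix_vector_mult_diff_distrib)
  moreover have "b2 y y \<le> b2 y' y'" using nonneg_bilinear_mono[OF b2_nonneg assms assms] .
  ultimately show ?thesis by (simp add: g_def add_mono)
qed

lemma J_xs: "J y *v xs = g xs + b1 xs (xs - y)"
  using b1_nonneg
  by (simp add: J_mult N_mult M_xs b_split g_def nonneg_bilinear_def bilinear_rsub algebra_simps)

lemma J_xs_nonneg: "y \<le> xs \<Longrightarrow> 0 \<le> J y *v xs"
  using g_nonneg[OF xs_nonneg] nonneg_bilinear_nonneg[OF b1_nonneg xs_nonneg, of "xs - y"]
  by (simp add: J_xs)

lemma decoupled_row_facts: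
  assumes y: "0 \<le> y" "y \<le> xs" and row_xs: "(J y *v xs)$k = 0"
    and row: "\<And>j. j \<notin> K \<Longrightarrow> J y $ k $ j = 0" and k: "k \<in> K"
  shows "a$k = 0" "b2 xs xs $ k = 0" "b1 xs (xs - y) $ k = 0"
    and "\<And>j. j \<notin> K \<Longrightarrow> M$k$j = 0" "\<And>j. j \<notin> K \<Longrightarrow> b1 (axis j 1) y $ k = 0"
proof -
  have Pxs: "0 \<le> P *v xs" by (rule nonneg_matrix_vector_mult[OF P_nonneg xs_nonneg])
  have nonneg: "0 \<le> a$k" "0 \<le> (P *v xs)$k" "0 \<le> b2 xs xs $ k" "0 \<le> b1 xs (xs - y) $ k"
    using a_nonneg Pxs nonneg_bilinear_nonneg[OF b2_nonneg xs_nonneg xs_nonneg] assms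
      nonneg_bilinear_nonneg[OF b1_nonneg xs_nonneg, of "xs - y"]
    by (auto simp: less_eq_vec_def)
  have "a$k + (P *v xs)$k + b2 xs xs $ k + b1 xs (xs - y) $ k = 0"
    using row_xs by (simp add: J_xs g_def)
  then have Pxs_k: "(P *v xs)$k = 0"
    and "a$k = 0" "b2 xs xs $ k = 0" "b1 xs (xs - y) $ k = 0" using nonneg by linarith+
  then show "a$k = 0" "b2 xs xs $ k = 0" "b1 xs (xs - y) $ k = 0" by simp_all
  have "\<forall>j\<in>UNIV. P$k$j * xs$j = 0"
    using Pxs_k P_nonneg xs_nonneg
    by (subst sum_nonneg_eq_0_iff[symmetric]) (auto simp: matrix_vector_mult_nth less_eq_vec_def)
  then have P_row: "P$k$j = 0" for j using xs_pos[of j] by (metis UNIV_I less_irrefl mult_eq_0_iff)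
  fix j assume j: "j \<notin> K"
  then have "k \<noteq> j" using k by blast
  then have "M$k$j \<le> 0" using M_Z by (simp add: Z_matrix_def)
  moreover have "M$k$j + P$k$j - b1 (axis j 1) y $ k = 0"
    using row[OF j] by (simp add: J_def M_split bl_right_nth)
  moreover have "0 \<le> b1 (axis j 1) y $ k" using bl_right_nonneg[OF b1_nonneg y(1)] by (simp add: bl_right_nth)
  ultimately show "M$k$j = 0" "b1 (axis j 1) y $ k = 0" using P_row[of j] by linarith+
qed

text \<open>Zeroing \<open>xs\<close> on such a decoupled block keeps the supersolution inequality on the
  block: both sides vanish there.\<close>

lemma supersolution_inside_block:
  assumes y: "0 \<le> y" "y \<le> xs" and row_xs: "\<And>k. k \<in> K \<Longrightarrow> (J y *v xs)$k = 0"
    and row: "\<And>k j. k \<in> K \<Longrightarrow> j \<notin> K \<Longrightarrow> J y $ k $ j = 0" and k: "k \<in> K"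
  shows "(a + b (zero_on K xs) (zero_on K xs))$k \<le> (M *v zero_on K xs)$k"
proof -
  let ?z = "zero_on K xs"
  note facts = decoupled_row_facts[OF y row_xs[OF k] row[OF k] k]
  have z: "0 \<le> ?z" "?z \<le> xs" using xs_nonneg by (simp_all add: zero_on_nonneg zero_on_le)
  have z_K: "\<And>j. j \<in> K \<Longrightarrow> ?z$j = 0" by (simp add: zero_on_def)
  have Mz: "(M *v ?z)$k = 0"
    by (rule matrix_vector_mult_decoupled_row[where K = K]) (simp_all add: facts(4) z_K)
  have "b1 ?z y $ k = (bl_right b1 y *v ?z)$k"
    using b1_nonneg by (simp add: bl_right_mult nonneg_bilinear_def)
  also have "\<dots> = 0"
    by (rule matrix_vector_mult_decoupled_row[where K = K]) (simp_all add: facts(5) z_K bl_right_nth)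
  finally have b1_zy: "b1 ?z y $ k = 0" .
  have b1_zx: "b1 ?z (xs - y) \<le> b1 xs (xs - y)"
    using y by (intro nonneg_bilinear_mono[OF b1_nonneg z(1,2)]) simp_all
  have "b1 ?z ?z $ k \<le> b1 ?z xs $ k"
    by (rule vec_le_nth[OF nonneg_bilinear_mono[OF b1_nonneg z(1) order_refl z]])
  also have "\<dots> = b1 ?z y $ k + b1 ?z (xs - y) $ k"
    using b1_nonneg by (simp add: nonneg_bilinear_def bilinear_rsub)
  also have "\<dots> \<le> b1 xs (xs - y) $ k"
    using b1_zy vec_le_nth[OF b1_zx] by simp
  finally have "b1 ?z ?z $ k \<le> 0" using facts(3) by simp
  moreover have "b2 ?z ?z $ k \<le> 0"
    using vec_le_nth[OF nonneg_bilinear_mono[OF b2_nonneg z z], of k] facts(2) by simp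
  ultimately show ?thesis using facts(1) Mz by (simp add: b_split)
qed

text \<open>Otherwise the maximum
  principle yields a decoupled block, and zeroing \<open>xs\<close> on it gives a nonnegative
  supersolution that is not above \<open>xs\<close>.\<close>

lemma J_inverse_positive:
  assumes y: "0 \<le> y" "y \<le> xs"
  shows "inverse_positive (J y)"
proof (unfold inverse_positive_def, intro allI impI, rule ccontr)
  fix w assume Jw: "0 \<le> J y *v w" and w: "\<not> 0 \<le> w"
  obtain K where K: "K \<noteq> {}" "\<And>k. k \<in> K \<Longrightarrow> (J y *v xs)$k = 0"
    "\<And>k j. k \<in> K \<Longrightarrow> j \<notin> K \<Longrightarrow> J y $ k $ j = 0"
    using Z_matrix_max_principle[OF J_Z_matrix[OF y(1)] xs_pos J_xs_nonneg[OF y(2)] Jw w] by metis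
  let ?z = "zero_on K xs"
  have "(a + b ?z ?z)$i \<le> (M *v ?z)$i" for i
  proof (cases "i \<in> K")
    case True
    then show ?thesis using supersolution_inside_block[OF y K(2,3)] by blast
  next
    case False
    then show ?thesis by (rule supersolution_outside_block)
  qed
  then have "a + b ?z ?z \<le> M *v ?z" unfolding less_eq_vec_def by blast
  then have "xs \<le> ?z" using xs_below_supersolution zero_on_nonneg xs_nonneg by blast
  obtain k where k: "k \<in> K" using K(1) by blast
  have "xs$k \<le> ?z$k" by (rule vec_le_nth[OF \<open>xs \<le> ?z\<close>])
  then show False using xs_pos[of k] k by (simp add: zero_on_def)
qed

lemma J_iteration:
  assumes "0 \<le> y" "y \<le> xs"
  shows "J y *v iteration y = g y"
  unfolding iteration_def
  by (rule matrix_inv_mult_right[OF inverse_positive_invertible[OF J_inverse_positive[OF assms]]])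

lemma J_mono:
  assumes "0 \<le> y" "y \<le> xs" "J y *v w \<le> J y *v w'"
  shows "w \<le> w'"
  using inverse_positive_mono[OF J_inverse_positive[OF assms(1,2)] assms(3)] .

lemma iteration_nonneg:
  assumes "0 \<le> y" "y \<le> xs"
  shows "0 \<le> iteration y"
  using J_inverse_positive[OF assms] J_iteration[OF assms] g_nonneg[OF assms(1)]
  unfolding inverse_positive_def by metis

lemma iteration_le_xs:
  assumes y: "0 \<le> y" "y \<le> xs"
  shows "iteration y \<le> xs"
proof (rule J_mono[OF y])
  have "g y \<le> g xs + b1 xs (xs - y)"
    using g_mono[OF y] nonneg_bilinear_nonneg[OF b1_nonneg xs_nonneg, of "xs - y"] y
    by (simp add: add_increasing2)
  then show "J y *v iteration y \<le> J y *v xs" by (simp add: J_iteration[OF y] J_xs)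
qed

lemma iteration_mono:
  assumes y: "0 \<le> y" "y \<le> y'" "y' \<le> xs"
  shows "iteration y \<le> iteration y'"
proof -
  have y': "0 \<le> y'" "y \<le> xs" using order_trans y by blast+
  have "J y' *v iteration y \<le> J y *v iteration y"
    using nonneg_bilinear_mono[OF b1_nonneg iteration_nonneg[OF y(1) y'(2)] order_refl y(1,2)]
    by (simp add: J_mult)
  also have "\<dots> \<le> J y' *v iteration y'"
    unfolding J_iteration[OF y(1) y'(2)] J_iteration[OF y'(1) y(3)] by (rule g_mono[OF y(1,2)])
  finally show ?thesis by (rule J_mono[OF y'(1) y(3)])
qed

lemma iteration_increasing:
  assumes y: "0 \<le> y" "y \<le> xs" and F: "Fmap M a b y \<le> 0"
  shows "y \<le> iteration y"
proof (rule J_mono[OF y])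
  have "J y *v y = g y + Fmap M a b y"
    unfolding J_mult N_mult Fmap_def b_split g_def by (simp add: algebra_simps)
  also have "\<dots> \<le> J y *v iteration y"
    using F by (simp add: J_iteration[OF y])
  finally show "J y *v y \<le> J y *v iteration y" .
qed

end


sublocale qve \<subseteq> basic: qve_splitting M a xs b M 0 b "\<lambda>_ _. 0"
  using M_Z b_nonneg by unfold_locales (simp_all add: nonneg_bilinear_def bilinear_def linear_zero)

context qve
begin

lemma basic_iteration: "basic.iteration y = matrix_inv (M - bl_right b y) *v a"
  by (simp add: basic.iteration_def basic.J_def basic.g_def)

text \<open>The basic iteration preserves \<open>F \<le> 0\<close>: for \<open>u = basic.iteration y\<close> one has
  \<open>F(u) = - b(u, u - y) \<le> 0\<close>, since \<open>u \<ge> y \<ge> 0\<close>.\<close>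

lemma basic_iteration_subsolution:
  assumes y: "0 \<le> y" "y \<le> xs" and F: "Fmap M a b y \<le> 0"
  shows "Fmap M a b (basic.iteration y) \<le> 0"
proof -
  define u where "u = basic.iteration y"
  have "M *v u - b u y = a" using basic.J_iteration[OF y] by (simp add: basic.J_mult basic.g_def u_def)
  then have "Fmap M a b u = - b u (u - y)"
    using b_nonneg by (simp add: Fmap_def nonneg_bilinear_def bilinear_rsub algebra_simps)
  moreover have "0 \<le> b u (u - y)"
    using basic.iteration_nonneg[OF y] basic.iteration_increasing[OF y F] b_nonneg
    by (simp add: u_def nonneg_bilinear_def)
  ultimately show ?thesis by (simp add: u_def)
qed

lemma basic_iterates_invariant:
  assumes x: "0 \<le> x" "x \<le> xs" and F: "Fmap M a b x \<le> 0"
  shows "0 \<le> (basic.iteration ^^ k) x \<and> (basic.iteration ^^ k) x \<le> xs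
    \<and> Fmap M a b ((basic.iteration ^^ k) x) \<le> 0"
  using assms
  by (induction k) (simp_all add: basic.iteration_nonneg basic.iteration_le_xs basic_iteration_subsolution)

end

context qve_splitting
begin

text \<open>On points with \<open>F(y) \<le> 0\<close> the split iteration is dominated by the basic one:
  \<open>v = iteration y \<ge> y\<close> gives \<open>(M - b(\<cdot>,y)) v = a - P (v - y) - b2(v - y, y) \<le> a\<close>.\<close>

lemma iteration_le_basic:
  assumes y: "0 \<le> y" "y \<le> xs" and F: "Fmap M a b y \<le> 0"
  shows "iteration y \<le> basic.iteration y"
proof (rule basic.J_mono[OF y])
  define v where "v = iteration y"
  have yv: "y \<le> v" using iteration_increasing[OF y F] by (simp add: v_def)
  have "N *v v - b1 v y = g y" using J_iteration[OF y] by (simp add: J_mult v_def)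
  then have "basic.J y *v v = a - (P *v (v - y) + (b2 v y - b2 y y))"
    by (simp add: basic.J_mult N_mult b_split g_def matrix_vector_mult_diff_distrib algebra_simps)
  moreover have "0 \<le> P *v (v - y)" using nonneg_matrix_vector_mult[OF P_nonneg] yv by simp
  moreover have "b2 y y \<le> b2 v y" using nonneg_bilinear_mono[OF b2_nonneg y(1) yv y(1) order_refl] .
  ultimately have "basic.J y *v v \<le> a" by (simp add: diff_le_eq add_increasing)
  then show "basic.J y *v iteration y \<le> basic.J y *v basic.iteration y"
    using basic.J_iteration[OF y] by (simp add: basic.g_def v_def)
qed

lemma iterates_le_basic_iterates:
  assumes x: "0 \<le> x" "x \<le> xs" and F: "Fmap M a b x \<le> 0"
  shows "(iteration ^^ k) x \<le> (basic.iteration ^^ k) x"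
proof -
  have "0 \<le> (iteration ^^ k) x \<and> (iteration ^^ k) x \<le> (basic.iteration ^^ k) x"
  proof (induction k)
    case 0 then show ?case using x by simp
  next
    case (Suc k)
    define u where "u = (basic.iteration ^^ k) x"
    define v where "v = (iteration ^^ k) x"
    have u: "0 \<le> u" "u \<le> xs" "Fmap M a b u \<le> 0"
      using basic_iterates_invariant[OF x F, of k] by (simp_all add: u_def)
    have v: "0 \<le> v" "v \<le> u" using Suc by (simp_all add: u_def v_def)
    have "iteration v \<le> iteration u" by (rule iteration_mono[OF v u(2)])
    also have "\<dots> \<le> basic.iteration u" by (rule iteration_le_basic[OF u])
    finally show ?case
      using iteration_nonneg[OF v(1) order_trans[OF v(2) u(2)]] by (simp add: u_def v_def)
  qed
  then show ?thesis by simp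
qed

end


theorem mainTheorem10:
  fixes M N P :: "real^'n^'n" and a xs :: "real^'n"
    and b b1 b2 :: "real^'n \<Rightarrow> real^'n \<Rightarrow> real^'n"
    and J :: "real^'n \<Rightarrow> real^'n^'n" and g f fhat :: "real^'n \<Rightarrow> real^'n"
  assumes M: "nonsingular_M_matrix M"
    and a: "0 \<le> a"
    and b: "nonneg_bilinear b"
    and H: "hypH M a b xs"
    and b1: "nonneg_bilinear b1" and b2: "nonneg_bilinear b2"
    and bsplit: "\<And>x y. b x y = b1 x y + b2 x y"
    and N: "M_matrix N" and P: "0 \<le> P" and MNP: "M = N - P"
    and J_def: "\<And>x. J x = N - bl_right b1 x"
    and g_def: "\<And>x. g x = a + P *v x + b2 x x"
    and f_def: "\<And>x. f x = matrix_inv (J x) *v g x"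
    and fhat_def: "\<And>x. fhat x = matrix_inv (M - bl_right b x) *v a"
    and x0: "0 \<le> x" and xle: "x \<le> xs" and Fx: "Fmap M a b x \<le> 0"
  shows "(fhat ^^ k) x \<ge> (f ^^ k) x"
proof -
  have "qve M a xs b"
    using M a b H by (auto simp: qve_def nonsingular_M_matrix_def hypH_def M_matrix_imp_Z_matrix)
  then interpret S: qve_splitting M a xs b N P b1 b2
    using b1 b2 bsplit N P MNP
    by (simp add: qve_splitting_def qve_splitting_axioms_def M_matrix_imp_Z_matrix)
  have "f = S.iteration"
    by (simp add: fun_eq_iff f_def J_def g_def S.iteration_def S.J_def S.g_def)
  moreover have "fhat = S.basic.iteration"
    by (simp add: fun_eq_iff fhat_def S.basic_iteration)
  ultimately show ?thesis using S.iterates_le_basic_iterates[OF x0 xle Fx] by simp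
qed

end
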